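(* Let $\mathbf{x}_1,\ldots,\mathbf{x}_n\in\mathbb{S}^{d-1}$ lie strictly on one side of a hyperplane through the origin, i.e., there exists $\mathbf{w}\in\mathbb{R}^d$ with $\langle\mathbf{w},\mathbf{x}_i\rangle>0$ for all $i$. Let $\mathbf{y}\in\arg\min_{\mathbf{v}\in\mathbb{S}^{d-1}}\max_{j\in[n]}\angle(\mathbf{v},\mathbf{x}_j)$ (any minimizer), let $H=\mathbf{y}^\perp$ and let $P_H$ denote orthogonal projection onto $H$. Then $\mathbf{0}\in\mathrm{conv}(P_H(\mathbf{x}_1),\ldots,P_H(\mathbf{x}_n))$.
   Context: $\mathbb{S}^{d-1}$ is the unit sphere in $\mathbb{R}^d$; $\angle(\mathbf{v},\mathbf{x})\in[0,\pi]$ denotes the angle between vectors; $\mathrm{conv}$ is the convex hull. *)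

theory Defs
  imports "HOL-Analysis.Analysis"
begin

definition vangle :: "'a::real_inner \<Rightarrow> 'a \<Rightarrow> real" where
  "vangle v x = arccos ((v \<bullet> x) / (norm v * norm x))"

definition proj_perp :: "'a::real_inner \<Rightarrow> 'a \<Rightarrow> 'a" where
  "proj_perp y x = x - ((x \<bullet> y) / (y \<bullet> y)) *\<^sub>R y"

end

theory Submission
  imports Defs
begin

text \<open>If 0 were not in the convex hull of the projections, a hyperplane separating it from them
  gives \<open>u \<perp> y\<close> with \<open>\<langle>u, x\<^sub>j\<rangle> > a > 0\<close> for all \<open>j\<close>. Tilting \<open>y\<close> towards \<open>u\<close>, i.e.
  \<open>v = (y + t u) / \<parallel>y + t u\<parallel>\<close> for small \<open>t > 0\<close>, raises every \<open>\<langle>v, x\<^sub>j\<rangle>\<close> above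
  \<open>min\<^sub>j \<langle>y, x\<^sub>j\<rangle>\<close>, because the gain is linear in \<open>t\<close> while normalisation costs only
  \<open>O(t\<^sup>2)\<close>. So \<open>v\<close> has a strictly smaller maximal angle than \<open>y\<close>, contradicting minimality.\<close>

lemma vangle_unit:
  assumes "norm v = 1" "norm x = 1"
  shows "vangle v x = arccos (v \<bullet> x)"
  using assms by (simp add: vangle_def)

lemma vangle_less_vangle_iff:
  fixes v x w z :: "'a::real_inner"
  assumes "norm v = 1" "norm x = 1" "norm w = 1" "norm z = 1"
  shows "vangle v x < vangle w z \<longleftrightarrow> w \<bullet> z < v \<bullet> x"
proof -
  have "\<bar>v \<bullet> x\<bar> \<le> 1" "\<bar>w \<bullet> z\<bar> \<le> 1"
    using Cauchy_Schwarz_ineq2[of v x] Cauchy_Schwarz_ineq2[of w z] assms by simp_all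
  then show ?thesis
    using assms by (simp add: vangle_unit arccos_less_mono)
qed

lemma Max_vangle_unit_attained:
  fixes y :: "'a::real_inner"
  assumes "finite I" "I \<noteq> {}" "norm y = 1" "\<And>i. i \<in> I \<Longrightarrow> norm (x i) = 1"
  obtains k where "k \<in> I" "(MAX i\<in>I. vangle y (x i)) = vangle y (x k)"
    "\<And>i. i \<in> I \<Longrightarrow> y \<bullet> x k \<le> y \<bullet> x i"
proof -
  obtain k where "k \<in> I" and k_max: "(MAX i\<in>I. vangle y (x i)) = vangle y (x k)"
  proof -
    have "(MAX i\<in>I. vangle y (x i)) \<in> (\<lambda>i. vangle y (x i)) ` I"
      using assms(1,2) by (intro Max_in) auto
    with that show ?thesis
      by auto
  qed
  have "y \<bullet> x k \<le> y \<bullet> x i" if "i \<in> I" for i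
  proof -
    have "vangle y (x i) \<le> vangle y (x k)"
      unfolding k_max[symmetric] using assms(1) that by (intro Max_ge) auto
    then show ?thesis
      by (simp add: not_less[symmetric] vangle_less_vangle_iff assms(3,4) that \<open>k \<in> I\<close>)
  qed
  with \<open>k \<in> I\<close> k_max show ?thesis
    by (rule that)
qed

lemma inner_proj_perp_commute: "p \<bullet> proj_perp y x = proj_perp y p \<bullet> x"
  unfolding proj_perp_def by (simp add: algebra_simps inner_commute)

lemma proj_perp_orthogonal:
  assumes "y \<noteq> 0"
  shows "proj_perp y p \<bullet> y = 0"
  using assms unfolding proj_perp_def by (simp add: algebra_simps)

lemma separating_hyperplane_proj_perp_0:
  fixes y :: "'a::euclidean_space"
  assumes "finite S" "y \<noteq> 0" "0 \<notin> convex hull (proj_perp y ` S)"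
  obtains u a where "u \<bullet> y = 0" "0 < a" "\<And>x. x \<in> S \<Longrightarrow> a < u \<bullet> x"
proof -
  have "closed (convex hull (proj_perp y ` S))"
    using assms(1) by (simp add: compact_imp_closed finite_imp_compact_convex_hull)
  then obtain p a where "0 < a" and sep: "\<And>z. z \<in> convex hull (proj_perp y ` S) \<Longrightarrow> a < p \<bullet> z"
    using separating_hyperplane_closed_0[OF convex_convex_hull _ assms(3)] by blast
  have "a < proj_perp y p \<bullet> x" if "x \<in> S" for x
  proof -
    have "a < p \<bullet> proj_perp y x"
      using that by (intro sep hull_inc) simp
    then show ?thesis
      by (simp add: inner_proj_perp_commute)
  qed
  with \<open>0 < a\<close> proj_perp_orthogonal[OF assms(2)] show ?thesis
    using that by blast
qed

lemma tilt_toward_unit_vector: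
  fixes y u :: "'a::real_inner"
  assumes "norm y = 1" "u \<bullet> y = 0" "0 < a" "c \<le> 1"
  obtains v where "norm v = 1" "\<And>x. c \<le> y \<bullet> x \<Longrightarrow> a < u \<bullet> x \<Longrightarrow> c < v \<bullet> x"
proof -
  define b where "b = u \<bullet> u"
  define t where "t = a / (b + 1)"
  define s where "s = norm (y + t *\<^sub>R u)"
  have "b \<ge> 0"
    by (simp add: b_def)
  then have "t > 0"
    using assms(3) by (simp add: t_def)
  have s_eq: "s = sqrt (1 + t\<^sup>2 * b)"
    using assms(1,2) by (simp add: s_def b_def norm_eq_sqrt_inner algebra_simps inner_commute power2_eq_square)
  have "1 \<le> s"
    using \<open>b \<ge> 0\<close> by (simp add: s_eq)
  have "s \<le> 1 + t\<^sup>2 * b"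
  proof -
    have "0 \<le> t\<^sup>2 * b"
      using \<open>b \<ge> 0\<close> by simp
    then have "1 + t\<^sup>2 * b \<le> (1 + t\<^sup>2 * b)\<^sup>2"
      by (intro self_le_power) simp_all
    then show ?thesis
      unfolding s_eq using \<open>0 \<le> t\<^sup>2 * b\<close> by (intro real_le_lsqrt) simp_all
  qed
  have "t * b < a"
    using \<open>b \<ge> 0\<close> assms(3) by (simp add: t_def field_simps)
  have "c < ((y + t *\<^sub>R u) /\<^sub>R s) \<bullet> x" if "c \<le> y \<bullet> x" "a < u \<bullet> x" for x
  proof -
    have "c * s = c + c * (s - 1)"
      by (simp add: algebra_simps)
    also have "\<dots> \<le> c + (s - 1)"
      using mult_right_mono[OF assms(4), of "s - 1"] \<open>1 \<le> s\<close> by simp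
    also have "\<dots> \<le> c + t * (t * b)"
      using \<open>s \<le> 1 + t\<^sup>2 * b\<close> by (simp add: power2_eq_square)
    also have "\<dots> < c + t * a"
      using \<open>t * b < a\<close> \<open>t > 0\<close> by simp
    also have "\<dots> < y \<bullet> x + t * (u \<bullet> x)"
      using that \<open>t > 0\<close> by (smt (verit) mult_strict_left_mono)
    finally show ?thesis
      using \<open>1 \<le> s\<close> by (simp add: inner_add_left field_simps)
  qed
  moreover have "norm ((y + t *\<^sub>R u) /\<^sub>R s) = 1"
    using \<open>1 \<le> s\<close> by (simp add: s_def[symmetric])
  ultimately show ?thesis
    using that by blast
qed

theorem lemma3p9:
  fixes x :: "nat \<Rightarrow> 'a::euclidean_space" and n :: nat and y :: 'a
  assumes "n \<ge> 1"
    and "\<forall>i<n. x i \<in> sphere 0 1"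
    and "\<exists>w. \<forall>i<n. w \<bullet> x i > 0"
    and "y \<in> sphere 0 1"
    and "\<forall>v\<in>sphere 0 1. (MAX j\<in>{..<n}. vangle y (x j)) \<le> (MAX j\<in>{..<n}. vangle v (x j))"
  shows "0 \<in> convex hull (proj_perp y ` x ` {..<n})"
proof (rule ccontr)
  assume not_in_hull: "0 \<notin> convex hull (proj_perp y ` x ` {..<n})"
  have "y \<noteq> 0"
    using assms(4) by auto
  then obtain u a where u: "u \<bullet> y = 0" "0 < a" and ux: "\<And>z. z \<in> x ` {..<n} \<Longrightarrow> a < u \<bullet> z"
    using separating_hyperplane_proj_perp_0[OF _ _ not_in_hull] by blast
  have x_unit: "\<And>j. j < n \<Longrightarrow> norm (x j) = 1" and y_unit: "norm y = 1"
    using assms(2,4) by auto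
  have fin: "finite {..<n}" "{..<n} \<noteq> {}"
    using assms(1) by (auto simp: lessThan_empty_iff)
  obtain k where k: "k < n" and k_max: "(MAX j\<in>{..<n}. vangle y (x j)) = vangle y (x k)"
    and k_min: "\<And>j. j < n \<Longrightarrow> y \<bullet> x k \<le> y \<bullet> x j"
    by (rule Max_vangle_unit_attained[OF fin y_unit, of x]) (simp_all add: x_unit)
  have "y \<bullet> x k \<le> 1"
    using norm_cauchy_schwarz[of y "x k"] y_unit x_unit[OF k] by simp
  then obtain v where "norm v = 1" and "\<And>j. j < n \<Longrightarrow> y \<bullet> x k < v \<bullet> x j"
    using tilt_toward_unit_vector[OF y_unit u] ux k_min by (metis image_eqI lessThan_iff)
  then have "vangle v (x j) < vangle y (x k)" if "j < n" for j
    using that by (simp add: vangle_less_vangle_iff y_unit x_unit k)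
  then have "(MAX j\<in>{..<n}. vangle v (x j)) < (MAX j\<in>{..<n}. vangle y (x j))"
    using fin k_max by simp
  moreover have "(MAX j\<in>{..<n}. vangle y (x j)) \<le> (MAX j\<in>{..<n}. vangle v (x j))"
    using assms(5) \<open>norm v = 1\<close> by simp
  ultimately show False
    by linarith
qed

end
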